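(* Consider the system $$\dot x=-y+x(x^3+xy^2)+\sum_{k=1}^2\varepsilon^k\Big(\lambda_kx+\sum_{i+j=4}a_{k,i,j}x^iy^j\Big),\qquad \dot y=x+y(x^3+xy^2)+\sum_{k=1}^2\varepsilon^k\Big(\lambda_ky+\sum_{i+j=4}b_{k,i,j}x^iy^j\Big)$$ with real coefficients. Then the unperturbed equation is $dr/d\theta=r^4\cos\theta$, with solution $r(\theta,z)=z(1-3z^3\sin\theta)^{-1/3}$ for $r(0)=z$, periodic and positive for $z\in D=(0,3^{-1/3})$, and the first order averaged function $f_1$, after the substitution $z=\big[\frac{1-s^2}{3(1+s^2)}\big]^{1/3}$ with $s\in(0,1)$ (a bijection onto $D$), equals $$\frac{\pi\,3^{2/3}(1-s)^{1/3}}{108(1+s)^{11/3}(1+s^2)^{4/3}}\big(N_1s^6+N_2s^5+N_3s^4+N_4s^3+N_3s^2+N_2s+N_1\big),$$ where $N_1=3a_{1,1,3}+a_{1,3,1}-3b_{1,0,4}-b_{1,2,2}-3b_{1,4,0}+72\lambda_1$, $N_2=-4a_{1,1,3}+4b_{1,0,4}+4a_{1,3,1}-4b_{1,2,2}-12b_{1,4,0}+288\lambda_1$, $N_3=5a_{1,1,3}-9a_{1,3,1}-5b_{1,0,4}+9b_{1,2,2}-5b_{1,4,0}+504\lambda_1$, $N_4=-8a_{1,1,3}+8a_{1,3,1}+8b_{1,0,4}-8b_{1,2,2}+40b_{1,4,0}+576\lambda_1$.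
   Context: Averaging framework (first order): in polar coordinates $x=r\cos\theta,y=r\sin\theta$, write $dr/d\theta=F_0(\theta,r)+\varepsilon F_1(\theta,r)+\varepsilon^2F_2(\theta,r)+O(\varepsilon^3)$; let $r(\theta,z)$ solve $dr/d\theta=F_0$ with $r(0,z)=z$ and $Y(\theta,z)$ solve $Y'=\partial_rF_0(\theta,r(\theta,z))Y$, $Y(0,z)=1$ (here $Y=(1-3z^3\sin\theta)^{-4/3}$). The first order averaged function is $f_1(z)=Y(2\pi,z)\int_0^{2\pi}Y(s,z)^{-1}F_1(s,r(s,z))\,ds$. *)

theory Defs
  imports "HOL-Analysis.Analysis"
begin

definition Pfield :: "(nat \<Rightarrow> nat \<Rightarrow> nat \<Rightarrow> real) \<Rightarrow> (nat \<Rightarrow> nat \<Rightarrow> nat \<Rightarrow> real) \<Rightarrow> (nat \<Rightarrow> real)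
    \<Rightarrow> real \<Rightarrow> real \<Rightarrow> real \<Rightarrow> real" where
  "Pfield a b lam eps x y = - y + x * (x^3 + x * y^2)
     + (\<Sum>k\<in>{1..2::nat}. eps^k * (lam k * x + (\<Sum>i\<le>4. a k i (4 - i) * x^i * y^(4 - i))))"

definition Qfield :: "(nat \<Rightarrow> nat \<Rightarrow> nat \<Rightarrow> real) \<Rightarrow> (nat \<Rightarrow> nat \<Rightarrow> nat \<Rightarrow> real) \<Rightarrow> (nat \<Rightarrow> real)
    \<Rightarrow> real \<Rightarrow> real \<Rightarrow> real \<Rightarrow> real" where
  "Qfield a b lam eps x y = x + y * (x^3 + x * y^2)
     + (\<Sum>k\<in>{1..2::nat}. eps^k * (lam k * y + (\<Sum>i\<le>4. b k i (4 - i) * x^i * y^(4 - i))))"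

definition drdtheta :: "(nat \<Rightarrow> nat \<Rightarrow> nat \<Rightarrow> real) \<Rightarrow> (nat \<Rightarrow> nat \<Rightarrow> nat \<Rightarrow> real) \<Rightarrow> (nat \<Rightarrow> real)
    \<Rightarrow> real \<Rightarrow> real \<Rightarrow> real \<Rightarrow> real" where
  "drdtheta a b lam eps \<theta> r =
     (let x = r * cos \<theta>; y = r * sin \<theta>;
          P = Pfield a b lam eps x y; Q = Qfield a b lam eps x y
      in ((x * P + y * Q) / r) / ((x * Q - y * P) / r^2))"

definition F0 :: "(nat \<Rightarrow> nat \<Rightarrow> nat \<Rightarrow> real) \<Rightarrow> (nat \<Rightarrow> nat \<Rightarrow> nat \<Rightarrow> real) \<Rightarrow> (nat \<Rightarrow> real)
    \<Rightarrow> real \<Rightarrow> real \<Rightarrow> real" where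
  "F0 a b lam \<theta> r = drdtheta a b lam 0 \<theta> r"

definition F1 :: "(nat \<Rightarrow> nat \<Rightarrow> nat \<Rightarrow> real) \<Rightarrow> (nat \<Rightarrow> nat \<Rightarrow> nat \<Rightarrow> real) \<Rightarrow> (nat \<Rightarrow> real)
    \<Rightarrow> real \<Rightarrow> real \<Rightarrow> real" where
  "F1 a b lam \<theta> r = deriv (\<lambda>eps. drdtheta a b lam eps \<theta> r) 0"

definition Dom :: "real set" where
  "Dom = {0<..<3 powr (-1/3)}"

definition rsol :: "real \<Rightarrow> real \<Rightarrow> real" where
  "rsol z \<theta> = z * (1 - 3 * z^3 * sin \<theta>) powr (-1/3)"

definition Ysol :: "real \<Rightarrow> real \<Rightarrow> real" where
  "Ysol z \<theta> = (1 - 3 * z^3 * sin \<theta>) powr (-4/3)"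

definition f1 :: "(nat \<Rightarrow> nat \<Rightarrow> nat \<Rightarrow> real) \<Rightarrow> (nat \<Rightarrow> nat \<Rightarrow> nat \<Rightarrow> real) \<Rightarrow> (nat \<Rightarrow> real)
    \<Rightarrow> real \<Rightarrow> real" where
  "f1 a b lam z = Ysol z (2*pi) *
     integral {0..2*pi} (\<lambda>s. F1 a b lam s (rsol z s) / Ysol z s)"

definition zsub :: "real \<Rightarrow> real" where
  "zsub s = ((1 - s^2) / (3 * (1 + s^2))) powr (1/3)"

end

theory Submission
  imports Defs
begin

text \<open>In polar coordinates the unperturbed field is a rotation plus the radial field
  x (x^2 + y^2) (x, y), so dr/d\<theta> = r^4 cos \<theta>, solved by r = z D^(-1/3) with
  D = 1 - 3 z^3 sin \<theta>, and the variational equation by Y = D^(-4/3).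
  The first-order term is F1 = \<lambda> r + r^4 R(\<theta>) - r^7 cos \<theta> T(\<theta>) with quintic forms R, T, so
  F1 / Y = \<lambda> z D + z^4 R - z^7 cos \<theta> T / D.  The shift \<theta> \<mapsto> \<theta> + \<pi> reverses R and T and turns D
  into 2 - D; folding the period in half cancels R and symmetrises 1/D into
  2 / (1 - 9 z^6 sin^2 \<theta>).  The part of cos \<theta> T odd in cos \<theta> integrates to zero over [0, \<pi>]; the even
  part is a cubic in sin^2 \<theta>, which after division leaves a polynomial in sin^2 \<theta> plus a
  multiple of 1 / (1 - 9 z^6 sin^2 \<theta>), whose integral is \<pi> / sqrt (1 - 9 z^6).  The substitution
  z = zsub s makes this square root rational, 2 s / (1 + s^2), and the result is the stated
  rational function of s.\<close>

section \<open>Polar form of the vector field\<close>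

type_synonym coeffs = "nat \<Rightarrow> nat \<Rightarrow> nat \<Rightarrow> real"

definition quartic :: "coeffs \<Rightarrow> nat \<Rightarrow> real \<Rightarrow> real \<Rightarrow> real" where
  "quartic c k x y = (\<Sum>i\<le>4. c k i (4 - i) * x^i * y^(4 - i))"

lemma quartic_scale: "quartic c k (r * x) (r * y) = r^4 * quartic c k x y"
  by (simp add: quartic_def atMost_Suc eval_nat_numeral algebra_simps)

lemma quartic_neg: "quartic c k (- x) (- y) = quartic c k x y"
  using quartic_scale[of c k "-1" x y] by simp

lemma Pfield_expand:
  "Pfield a b lam eps x y = - y + x * (x^3 + x * y^2)
     + eps * (lam 1 * x + quartic a 1 x y) + eps^2 * (lam 2 * x + quartic a 2 x y)"
  by (simp add: Pfield_def quartic_def numeral_2_eq_2)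

lemma Qfield_expand:
  "Qfield a b lam eps x y = x + y * (x^3 + x * y^2)
     + eps * (lam 1 * y + quartic b 1 x y) + eps^2 * (lam 2 * y + quartic b 2 x y)"
  by (simp add: Qfield_def quartic_def numeral_2_eq_2)

lemma polar_norm: "((r::real) * cos \<theta>)^2 + (r * sin \<theta>)^2 = r^2"
  by (simp add: power_mult_distrib flip: distrib_left)

lemma drdtheta_polar:
  fixes a b :: coeffs and lam :: "nat \<Rightarrow> real" and r \<theta> eps :: real
  defines "x \<equiv> r * cos \<theta>" and "y \<equiv> r * sin \<theta>"
  defines "N \<equiv> \<lambda>k. (x * (lam k * x + quartic a k x y) + y * (lam k * y + quartic b k x y)) / r"
    and "M \<equiv> \<lambda>k. (x * (lam k * y + quartic b k x y) - y * (lam k * x + quartic a k x y)) / r^2"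
  assumes "r \<noteq> 0"
  shows "drdtheta a b lam eps \<theta> r
    = (r^4 * cos \<theta> + eps * N 1 + eps^2 * N 2) / (1 + eps * M 1 + eps^2 * M 2)"
proof -
  have r2: "x^2 + y^2 = r^2"
    unfolding x_def y_def by (rule polar_norm)
  have unperturbed_radial: "x * (- y + x * (x^3 + x * y^2)) + y * (x + y * (x^3 + x * y^2)) = x * r^4"
    using r2 by algebra
  have unperturbed_angular: "x * (x + y * (x^3 + x * y^2)) - y * (- y + x * (x^3 + x * y^2)) = r^2"
    using r2 by algebra
  define P where "P = Pfield a b lam eps x y"
  define Q where "Q = Qfield a b lam eps x y"
  have rN: "r * N k = x * (lam k * x + quartic a k x y) + y * (lam k * y + quartic b k x y)" for k
    using assms(5) by (simp add: N_def)
  have rM: "r^2 * M k = x * (lam k * y + quartic b k x y) - y * (lam k * x + quartic a k x y)" for k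
    using assms(5) by (simp add: M_def)
  have radial: "x * P + y * Q = x * r^4 + eps * (r * N 1) + eps^2 * (r * N 2)"
    using unperturbed_radial unfolding rN P_def Q_def Pfield_expand Qfield_expand by algebra
  have angular: "x * Q - y * P = r^2 + eps * (r^2 * M 1) + eps^2 * (r^2 * M 2)"
    using unperturbed_angular unfolding rM P_def Q_def Pfield_expand Qfield_expand by algebra
  have "drdtheta a b lam eps \<theta> r
      = ((x * r^4 + eps * (r * N 1) + eps^2 * (r * N 2)) / r)
        / ((r^2 + eps * (r^2 * M 1) + eps^2 * (r^2 * M 2)) / r^2)"
    unfolding drdtheta_def Let_def x_def[symmetric] y_def[symmetric] P_def[symmetric] Q_def[symmetric]
      radial angular ..
  also have "(x * r^4 + eps * (r * N 1) + eps^2 * (r * N 2)) / r = r^4 * cos \<theta> + eps * N 1 + eps^2 * N 2"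
    using assms(5) by (simp add: x_def field_simps)
  also have "(r^2 + eps * (r^2 * M 1) + eps^2 * (r^2 * M 2)) / r^2 = 1 + eps * M 1 + eps^2 * M 2"
    using assms(5) by (simp add: field_simps)
  finally show ?thesis .
qed

lemma F0_polar: "r \<noteq> 0 \<Longrightarrow> F0 a b lam \<theta> r = r^4 * cos \<theta>"
  by (simp add: F0_def drdtheta_polar)

lemma has_real_derivative_quadratic_quotient_at_0:
  fixes n0 n1 n2 m1 m2 :: real
  shows "((\<lambda>e. (n0 + e * n1 + e^2 * n2) / (1 + e * m1 + e^2 * m2)) has_real_derivative n1 - n0 * m1) (at 0)"
  by (auto intro!: derivative_eq_intros)

definition radial_part :: "coeffs \<Rightarrow> coeffs \<Rightarrow> real \<Rightarrow> real" where
  "radial_part a b \<theta>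
     = cos \<theta> * quartic a 1 (cos \<theta>) (sin \<theta>) + sin \<theta> * quartic b 1 (cos \<theta>) (sin \<theta>)"

definition angular_part :: "coeffs \<Rightarrow> coeffs \<Rightarrow> real \<Rightarrow> real" where
  "angular_part a b \<theta>
     = cos \<theta> * quartic b 1 (cos \<theta>) (sin \<theta>) - sin \<theta> * quartic a 1 (cos \<theta>) (sin \<theta>)"

lemma F1_polar:
  assumes "r \<noteq> 0"
  shows "F1 a b lam \<theta> r = lam 1 * r + r^4 * radial_part a b \<theta> - r^7 * cos \<theta> * angular_part a b \<theta>"
proof -
  have "F1 a b lam \<theta> r
      = (r * cos \<theta> * (lam 1 * (r * cos \<theta>) + r^4 * quartic a 1 (cos \<theta>) (sin \<theta>))
         + r * sin \<theta> * (lam 1 * (r * sin \<theta>) + r^4 * quartic b 1 (cos \<theta>) (sin \<theta>))) / r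
       - r^4 * cos \<theta> * ((r * cos \<theta> * (lam 1 * (r * sin \<theta>) + r^4 * quartic b 1 (cos \<theta>) (sin \<theta>))
         - r * sin \<theta> * (lam 1 * (r * cos \<theta>) + r^4 * quartic a 1 (cos \<theta>) (sin \<theta>))) / r^2)"
    unfolding F1_def drdtheta_polar[OF assms] quartic_scale
    by (rule DERIV_imp_deriv[OF has_real_derivative_quadratic_quotient_at_0])
  also have "\<dots> = lam 1 * ((r * cos \<theta>)^2 + (r * sin \<theta>)^2) / r + r^4 * radial_part a b \<theta>
      - r^7 * cos \<theta> * angular_part a b \<theta>"
    using assms by (simp add: radial_part_def angular_part_def field_simps eval_nat_numeral)
  finally show ?thesis
    using assms by (simp only: polar_norm) (simp add: power2_eq_square)
qed

lemma radial_part_shift_pi: "radial_part a b (t + pi) = - radial_part a b t"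
  by (simp add: radial_part_def quartic_neg)

lemma angular_part_shift_pi: "angular_part a b (t + pi) = - angular_part a b t"
  by (simp add: angular_part_def quartic_neg)

section \<open>The unperturbed solution and its variational equation\<close>

lemma powr_third_cube: "0 < x \<Longrightarrow> (x powr (1/3)) ^ 3 = (x::real)"
  by (simp add: powr_power)

lemma cube_powr_third:
  assumes "0 < x"
  shows "(x ^ 3) powr (1/3) = (x::real)"
proof -
  have e: "x powr 3 = x ^ 3"
    using assms powr_realpow[of x 3] by simp
  have "(x ^ 3) powr (1/3) = (x powr 3) powr (1/3)"
    unfolding e ..
  also have "\<dots> = x"
    using assms by (simp only: powr_powr) simp
  finally show ?thesis .
qed

lemma Dom_iff: "z \<in> Dom \<longleftrightarrow> 0 < z \<and> 3 * z^3 < 1"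
proof -
  have "(3 powr (-1/3::real)) ^ 3 = 3 powr (real 3 * (-1/3))"
    by (rule powr_power) simp
  also have "\<dots> = 1/3"
    by (simp add: powr_minus_divide)
  finally have "(3 powr (-1/3::real)) ^ 3 = 1/3" .
  moreover have "z < 3 powr (-1/3) \<longleftrightarrow> z^3 < (3 powr (-1/3))^3" if "0 < z"
    using that by (meson less_le_not_le order_less_imp_le power_less_imp_less_base power_strict_mono
        powr_ge_zero zero_less_numeral)
  ultimately show ?thesis unfolding Dom_def by auto
qed

lemma rsol_base_pos: "z \<in> Dom \<Longrightarrow> 0 < 1 - 3 * z^3 * sin t"
proof -
  assume "z \<in> Dom"
  then have "0 < z" "3 * z^3 < 1" by (auto simp: Dom_iff)
  moreover have "3 * z^3 * sin t \<le> 3 * z^3" using \<open>0 < z\<close> by (simp add: mult_left_le)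
  ultimately show ?thesis by linarith
qed

lemma has_real_derivative_F0_radius:
  assumes "r \<noteq> 0"
  shows "((\<lambda>\<rho>. F0 a b lam \<theta> \<rho>) has_real_derivative 4 * r^3 * cos \<theta>) (at r)"
proof -
  have "((\<lambda>\<rho>. \<rho>^4 * cos \<theta>) has_real_derivative 4 * r^3 * cos \<theta>) (at r)"
    by (auto intro!: derivative_eq_intros)
  moreover have "eventually (\<lambda>\<rho>. F0 a b lam \<theta> \<rho> = \<rho>^4 * cos \<theta>) (nhds r)"
    using t1_space_nhds[OF assms] by eventually_elim (simp add: F0_polar)
  ultimately show ?thesis
    by (subst DERIV_cong_ev[OF refl _ refl])
qed

lemma rsol_solves:
  assumes "z \<in> Dom"
  shows "(rsol z has_real_derivative F0 a b lam \<theta> (rsol z \<theta>)) (at \<theta>)"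
    and "0 < rsol z \<theta>"
    and "rsol z (\<theta> + 2*pi) = rsol z \<theta>"
proof -
  define D where "D = 1 - 3 * z^3 * sin \<theta>"
  have D: "0 < D" unfolding D_def using rsol_base_pos[OF assms] .
  have z: "0 < z" using assms by (auto simp: Dom_iff)
  show pos: "0 < rsol z \<theta>" using z D by (simp add: rsol_def D_def)
  have "(rsol z has_real_derivative z * ((-1/3) * D powr (-1/3 - 1) * (- (3 * z^3 * cos \<theta>)))) (at \<theta>)"
    unfolding rsol_def D_def using D[unfolded D_def]
    by (auto intro!: derivative_eq_intros DERIV_fun_powr[THEN DERIV_cong])
  also have "z * ((-1/3) * D powr (-1/3 - 1) * (- (3 * z^3 * cos \<theta>))) = (z * D powr (-1/3))^4 * cos \<theta>"
  proof -
    have "(D powr (-1/3)) ^ 4 = D powr (-4/3)"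
      using D by (simp add: powr_power)
    then show ?thesis
      unfolding power_mult_distrib by (simp add: eval_nat_numeral)
  qed
  also have "\<dots> = F0 a b lam \<theta> (rsol z \<theta>)"
    using pos by (simp only: F0_polar[OF less_imp_neq[OF pos, symmetric]]) (simp add: rsol_def D_def)
  finally show "(rsol z has_real_derivative F0 a b lam \<theta> (rsol z \<theta>)) (at \<theta>)" .
  show "rsol z (\<theta> + 2*pi) = rsol z \<theta>" by (simp add: rsol_def)
qed

lemma Ysol_solves:
  assumes "z \<in> Dom"
  shows "(Ysol z has_real_derivative deriv (\<lambda>\<rho>. F0 a b lam \<theta> \<rho>) (rsol z \<theta>) * Ysol z \<theta>) (at \<theta>)"
proof -
  define D where "D = 1 - 3 * z^3 * sin \<theta>"
  have D: "0 < D" unfolding D_def using rsol_base_pos[OF assms] .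
  have dF0: "deriv (\<lambda>\<rho>. F0 a b lam \<theta> \<rho>) (rsol z \<theta>) = 4 * rsol z \<theta> ^ 3 * cos \<theta>"
    using rsol_solves(2)[OF assms, of \<theta>] by (intro DERIV_imp_deriv has_real_derivative_F0_radius) simp
  have "(Ysol z has_real_derivative (-4/3) * D powr (-4/3 - 1) * (- (3 * z^3 * cos \<theta>))) (at \<theta>)"
    unfolding Ysol_def D_def using D[unfolded D_def]
    by (auto intro!: derivative_eq_intros DERIV_fun_powr[THEN DERIV_cong])
  also have "(-4/3) * D powr (-4/3 - 1) * (- (3 * z^3 * cos \<theta>)) = 4 * rsol z \<theta> ^ 3 * cos \<theta> * Ysol z \<theta>"
  proof -
    have r3: "rsol z \<theta> ^ 3 = z^3 / D"
      unfolding rsol_def D_def[symmetric] power_mult_distrib using D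
      by (simp add: powr_minus_divide power_divide powr_third_cube)
    have "D powr (-4/3 - 1) = D powr (-4/3) / D"
      using D powr_diff[of D "-4/3" 1] by simp
    then show ?thesis
      unfolding Ysol_def D_def[symmetric] r3 using D by (simp add: field_simps)
  qed
  finally show ?thesis unfolding dF0 .
qed

section \<open>Trigonometric integrals\<close>

lemma has_integral_of_real_derivative:
  fixes G g :: "real \<Rightarrow> real"
  assumes "\<And>x. (G has_real_derivative g x) (at x)" and "a \<le> b"
  shows "(g has_integral (G b - G a)) {a..b}"
  by (rule fundamental_theorem_of_calculus[OF assms(2)])
     (use assms(1) in \<open>auto intro: has_vector_derivative_at_within
        simp: has_real_derivative_iff_has_vector_derivative\<close>)

lemma integral_fold_half_period:
  fixes f :: "real \<Rightarrow> real"
  assumes "continuous_on {0..2*pi} f"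
  shows "integral {0..2*pi} f = integral {0..pi} (\<lambda>t. f t + f (t + pi))"
proof -
  have int: "f integrable_on {a..b}" if "0 \<le> a" "b \<le> 2*pi" for a b
    by (rule integrable_continuous_real, rule continuous_on_subset[OF assms]) (use that in auto)
  have "f integrable_on {0..pi}" "(\<lambda>t. f (t + pi)) integrable_on {0..pi}"
    using int integrable_shift_real_ivl[OF int, of pi "2*pi" pi] by auto
  moreover have "integral {0..pi} (\<lambda>t. f (t + pi)) = integral {pi..2*pi} f"
    using integral_shift_real_ivl[where f = f and a = pi and b = "2*pi" and c = pi] by simp
  moreover have "integral {0..pi} f + integral {pi..2*pi} f = integral {0..2*pi} f"
    by (rule Henstock_Kurzweil_Integration.integral_combine) (use int in auto)
  ultimately show ?thesis by (simp add: integral_add)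
qed

lemma has_integral_cos_mult_sin_comp:
  fixes g :: "real \<Rightarrow> real"
  assumes "continuous_on {0..1} g"
  shows "((\<lambda>t. cos t * g (sin t)) has_integral 0) {0..pi}"
proof -
  have "sin ` {0..pi} \<subseteq> {0..1}"
    by (auto intro: sin_ge_zero)
  then show ?thesis
    using has_integral_substitution[where f = g and g = sin and g' = cos and a = 0 and b = pi and c = 0 and d = 1]
      assms by (simp add: has_field_derivative_at_within[OF DERIV_sin])
qed

lemma has_integral_sin_sq: "((\<lambda>t. sin t ^ 2) has_integral pi/2) {0..pi}"
proof -
  have "((\<lambda>t. t/2 - sin t * cos t / 2) has_real_derivative sin x ^ 2) (at x)" for x
  proof -
    have "((\<lambda>t. t/2 - sin t * cos t / 2) has_real_derivative 1/2 - (cos x * cos x - sin x * sin x)/2) (at x)"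
      by (auto intro!: derivative_eq_intros simp: field_simps)
    moreover have "1/2 - (cos x * cos x - sin x * sin x)/2 = sin x ^ 2"
      using sin_squared_eq[of x] by (simp add: power2_eq_square field_simps)
    ultimately show ?thesis by simp
  qed
  from has_integral_of_real_derivative[OF this, of 0 pi] show ?thesis by simp
qed

lemma has_integral_sin_pow4: "((\<lambda>t. sin t ^ 4) has_integral 3*pi/8) {0..pi}"
proof -
  have "((\<lambda>t. 3*t/8 - 3 * sin t * cos t / 8 - sin t ^ 3 * cos t / 4) has_real_derivative sin x ^ 4) (at x)" for x
  proof -
    have "((\<lambda>t. 3*t/8 - 3 * sin t * cos t / 8 - sin t ^ 3 * cos t / 4) has_real_derivative
      3/8 - 3*(cos x * cos x - sin x * sin x)/8 - (3 * sin x^2 * cos x * cos x - sin x ^3 * sin x)/4) (at x)"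
      by (auto intro!: derivative_eq_intros simp: field_simps power2_eq_square power3_eq_cube)
    moreover have "3/8 - 3*(cos x * cos x - sin x * sin x)/8 - (3 * sin x^2 * cos x * cos x - sin x ^3 * sin x)/4
        = sin x ^ 4"
      using sin_cos_squared_add[of x] by algebra
    ultimately show ?thesis by simp
  qed
  from has_integral_of_real_derivative[OF this, of 0 pi] show ?thesis by simp
qed

lemma cos_sq_plus_sin_sq_pos:
  fixes c t :: real
  assumes "0 < c"
  shows "0 < cos t ^ 2 + c * sin t ^ 2"
proof (cases "sin t = 0")
  case True
  then have "cos t ^ 2 = 1" using sin_cos_squared_add[of t] by simp
  with True show ?thesis by simp
next
  case False
  with assms show ?thesis by (simp add: add_nonneg_pos)
qed

lemma DERIV_arctan_quotient:
  fixes N M :: "real \<Rightarrow> real"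
  assumes "(N has_real_derivative N') (at x)" "(M has_real_derivative M') (at x)" "M x \<noteq> 0"
  shows "((\<lambda>x. arctan (N x / M x)) has_real_derivative (N' * M x - N x * M') / (M x ^ 2 + N x ^ 2)) (at x)"
proof -
  have "((\<lambda>x. arctan (N x / M x)) has_real_derivative
      inverse (1 + (N x / M x)^2) * ((N' * M x - N x * M') / (M x * M x))) (at x)"
    by (rule DERIV_chain2[OF DERIV_arctan DERIV_divide[OF assms(1,2)]]) (use assms(3) in simp)
  also have "inverse (1 + (N x / M x)^2) = M x ^ 2 / (M x ^ 2 + N x ^ 2)"
    using assms(3) by (simp add: field_simps)
  also have "M x ^ 2 / (M x ^ 2 + N x ^ 2) * ((N' * M x - N x * M') / (M x * M x))
      = (N' * M x - N x * M') / (M x ^ 2 + N x ^ 2)"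
    using assms(3) by (simp add: power2_eq_square)
  finally show ?thesis .
qed

lemma has_integral_inverse_one_minus_sin_sq:
  fixes w :: real
  assumes w: "0 < w"
  shows "((\<lambda>t. 1 / (1 - (1 - w^2) * sin t ^ 2)) has_integral pi / w) {0..pi}"
proof -
  \<comment> \<open>The antiderivative arctan (w tan t) / w, rewritten by the addition formula for arctan
    so that it is smooth on the whole line.\<close>
  define N where "N t = (w - 1) * sin t * cos t" for t
  define M where "M t = cos t ^ 2 + w * sin t ^ 2" for t
  have "((\<lambda>t. (t + arctan (N t / M t)) / w) has_real_derivative 1 / (1 - (1 - w^2) * sin t ^ 2)) (at t)"
    for t
  proof -
    define Q where "Q = cos t ^ 2 + w^2 * sin t ^ 2"
    define N' where "N' = (w - 1) * (cos t * cos t - sin t * sin t)"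
    define M' where "M' = 2 * cos t * (- sin t) + w * (2 * sin t * cos t)"
    have sc: "sin t ^ 2 + cos t ^ 2 = 1" by simp
    have M: "0 < M t" and Q: "0 < Q"
      unfolding M_def Q_def using w by (auto intro: cos_sq_plus_sin_sq_pos)
    have "(N has_real_derivative N') (at t)" "(M has_real_derivative M') (at t)"
      unfolding N_def M_def N'_def M'_def by (auto intro!: derivative_eq_intros simp: algebra_simps)
    from DERIV_arctan_quotient[OF this less_imp_neq[OF M, symmetric]]
    have "((\<lambda>t. (t + arctan (N t / M t)) / w) has_real_derivative
        (1 + (N' * M t - N t * M') / (M t ^ 2 + N t ^ 2)) / w) (at t)"
      by (intro DERIV_cdivide DERIV_add DERIV_ident)
    moreover have "M t ^ 2 + N t ^ 2 = Q"
      unfolding M_def N_def Q_def using sc by algebra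
    moreover have "N' * M t - N t * M' = w - Q"
      unfolding M_def N_def Q_def N'_def M'_def using sc by algebra
    moreover have "1 - (1 - w^2) * sin t ^ 2 = Q"
      unfolding Q_def using sc by (simp add: algebra_simps)
    ultimately show ?thesis
      using Q w by (simp add: field_simps)
  qed
  from has_integral_of_real_derivative[OF this, of 0 pi] show ?thesis
    by (simp add: N_def)
qed

lemma has_integral_cubic_sin_sq_quotient:
  fixes e0 e1 e2 e3 w :: real
  assumes w: "0 < w" "w \<noteq> 1"
  defines "d \<equiv> 1 - w^2"
  shows "((\<lambda>t. (e0 + e1 * sin t ^ 2 + e2 * sin t ^ 4 + e3 * sin t ^ 6) / (1 - d * sin t ^ 2)) has_integral
      pi * ((e0 + e1/d + e2/d^2 + e3/d^3) / w - (e1 + e2/d + e3/d^2) / d - (e2 + e3/d) / (2*d)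
        - 3*e3 / (8*d))) {0..pi}"
proof -
  have d: "d \<noteq> 0"
    using w by (auto simp: d_def power2_eq_1_iff)
  define p2 where "p2 = - e3 / d"
  define p1 where "p1 = (p2 - e2) / d"
  define p0 where "p0 = (p1 - e1) / d"
  define K where "K = e0 - p0"
  have division: "e0 + e1 * y + e2 * y^2 + e3 * y^3 = (1 - d * y) * (p0 + p1 * y + p2 * y^2) + K" for y
    unfolding K_def p0_def p1_def p2_def using d by (simp add: field_simps eval_nat_numeral)
  have "1 - d * sin t ^ 2 \<noteq> 0" for t
  proof -
    have "1 - d * sin t ^ 2 = cos t ^ 2 + w^2 * sin t ^ 2"
      unfolding d_def using sin_cos_squared_add[of t] by algebra
    then show ?thesis
      using cos_sq_plus_sin_sq_pos[of "w^2" t] w by simp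
  qed
  moreover have "e0 + e1 * sin t ^ 2 + e2 * sin t ^ 4 + e3 * sin t ^ 6
      = (1 - d * sin t ^ 2) * (p0 + p1 * sin t ^ 2 + p2 * sin t ^ 4) + K" for t
    using division[of "sin t ^ 2"] by (simp flip: power_mult)
  ultimately have "(e0 + e1 * sin t ^ 2 + e2 * sin t ^ 4 + e3 * sin t ^ 6) / (1 - d * sin t ^ 2)
      = p0 + p1 * sin t ^ 2 + p2 * sin t ^ 4 + K * (1 / (1 - d * sin t ^ 2))" for t
    by (simp add: add_divide_distrib)
  moreover have "((\<lambda>t. p0 + p1 * sin t ^ 2 + p2 * sin t ^ 4 + K * (1 / (1 - d * sin t ^ 2))) has_integral
      p0 * pi + p1 * (pi / 2) + p2 * (3 * pi / 8) + K * (pi / w)) {0..pi}"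
    unfolding d_def
    by (intro has_integral_add has_integral_mult_right has_integral_sin_sq has_integral_sin_pow4
        has_integral_inverse_one_minus_sin_sq w)
      (use has_integral_const_real[of p0 0 pi] in \<open>simp add: mult.commute\<close>)
  moreover have "p0 * pi + p1 * (pi / 2) + p2 * (3 * pi / 8) + K * (pi / w)
      = pi * ((e0 + e1/d + e2/d^2 + e3/d^3) / w - (e1 + e2/d + e3/d^2) / d - (e2 + e3/d) / (2*d)
        - 3*e3 / (8*d))"
    unfolding K_def p0_def p1_def p2_def using d w by (simp add: field_simps power2_eq_square power3_eq_cube)
  ultimately show ?thesis by simp
qed

section \<open>The first order averaged function\<close>

lemma F1_over_Ysol:
  fixes z t :: real
  assumes z: "z \<in> Dom"
  defines "D \<equiv> 1 - 3 * z^3 * sin t"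
  shows "F1 a b lam t (rsol z t) / Ysol z t
    = lam 1 * z * D + z^4 * radial_part a b t - z^7 * cos t * angular_part a b t / D"
proof -
  have D: "0 < D" unfolding D_def using rsol_base_pos[OF z] .
  define q where "q = D powr (1/3)"
  have q: "0 < q" using D by (simp add: q_def)
  have Dq: "D = q^3" unfolding q_def using powr_third_cube[OF D] by simp
  have r: "rsol z t = z / q"
    unfolding rsol_def D_def[symmetric] q_def by (simp add: powr_minus_divide)
  have Y: "Ysol z t = 1 / q^4"
  proof -
    have "D powr (4/3) = q^4" unfolding q_def using D by (simp add: powr_power)
    then show ?thesis unfolding Ysol_def D_def[symmetric] by (simp add: powr_minus_divide)
  qed
  have "z / q \<noteq> 0" using rsol_solves(2)[OF z, of t] by (simp only: r)
  then show ?thesis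
    unfolding Dq r Y F1_polar[OF \<open>z / q \<noteq> 0\<close>] using q by (simp add: field_simps eval_nat_numeral)
qed

lemma F1_over_Ysol_fold_pi:
  assumes z: "z \<in> Dom"
  shows "F1 a b lam t (rsol z t) / Ysol z t + F1 a b lam (t + pi) (rsol z (t + pi)) / Ysol z (t + pi)
    = 2 * lam 1 * z - 2 * z^7 * cos t * angular_part a b t / (1 - 9 * z^6 * sin t ^ 2)"
proof -
  define p where "p = 1 - 3 * z^3 * sin t"
  define m where "m = 1 + 3 * z^3 * sin t"
  have "0 < p" "0 < m"
    using rsol_base_pos[OF z, of t] rsol_base_pos[OF z, of "t + pi"] by (simp_all add: p_def m_def)
  have "F1 a b lam t (rsol z t) / Ysol z t + F1 a b lam (t + pi) (rsol z (t + pi)) / Ysol z (t + pi)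
      = 2 * lam 1 * z - z^7 * cos t * angular_part a b t * (1 / p + 1 / m)"
    unfolding F1_over_Ysol[OF z] radial_part_shift_pi angular_part_shift_pi p_def m_def
    by (simp add: algebra_simps)
  also have "1 / p + 1 / m = 2 / (1 - 9 * z^6 * sin t ^ 2)"
  proof -
    have "1 - 9 * z^6 * sin t ^ 2 = p * m"
      unfolding p_def m_def by (simp add: algebra_simps power2_eq_square eval_nat_numeral)
    moreover have "p + m = 2"
      by (simp add: p_def m_def)
    ultimately show ?thesis
      using \<open>0 < p\<close> \<open>0 < m\<close> by (simp add: field_simps)
  qed
  finally show ?thesis by simp
qed

lemma f1_eq_integral_half_period:
  assumes z: "z \<in> Dom"
  shows "f1 a b lam z
    = integral {0..pi} (\<lambda>t. 2 * lam 1 * z - 2 * z^7 * cos t * angular_part a b t / (1 - 9 * z^6 * sin t ^ 2))"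
proof -
  define g where "g t = F1 a b lam t (rsol z t) / Ysol z t" for t
  have "Ysol z (2*pi) = 1"
    by (simp add: Ysol_def)
  then have "f1 a b lam z = integral {0..2*pi} g"
    unfolding f1_def g_def by simp
  also have "\<dots> = integral {0..pi} (\<lambda>t. g t + g (t + pi))"
    using rsol_base_pos[OF z, THEN less_imp_neq]
    by (intro integral_fold_half_period)
      (auto simp: g_def F1_over_Ysol[OF z] radial_part_def angular_part_def quartic_def
        intro!: continuous_intros)
  also have "\<dots> = integral {0..pi}
      (\<lambda>t. 2 * lam 1 * z - 2 * z^7 * cos t * angular_part a b t / (1 - 9 * z^6 * sin t ^ 2))"
    unfolding g_def F1_over_Ysol_fold_pi[OF z] ..
  finally show ?thesis .
qed

definition angular_even :: "coeffs \<Rightarrow> coeffs \<Rightarrow> real \<Rightarrow> real" where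
  "angular_even a b y = (1 - y) * ((b 1 0 4 - a 1 1 3) * y^2 + (b 1 2 2 - a 1 3 1) * (1 - y) * y
     + b 1 4 0 * (1 - y)^2)"

definition angular_odd :: "coeffs \<Rightarrow> coeffs \<Rightarrow> real \<Rightarrow> real" where
  "angular_odd a b x = b 1 1 3 * (1 - x^2) * x^3 + b 1 3 1 * (1 - x^2)^2 * x
     - a 1 0 4 * x^5 - a 1 2 2 * (1 - x^2) * x^3 - a 1 4 0 * (1 - x^2)^2 * x"

lemma cos_mult_angular_part:
  "cos t * angular_part a b t = angular_even a b (sin t ^ 2) + cos t * angular_odd a b (sin t)"
proof -
  have "sin t ^ 2 + cos t ^ 2 = 1" by simp
  then show ?thesis
    unfolding angular_part_def angular_even_def angular_odd_def quartic_def
    by (simp add: atMost_Suc eval_nat_numeral) algebra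
qed

lemma angular_even_expand:
  "angular_even a b y = b 1 4 0 + ((b 1 2 2 - a 1 3 1) - 3 * b 1 4 0) * y
    + ((b 1 0 4 - a 1 1 3) - 2 * (b 1 2 2 - a 1 3 1) + 3 * b 1 4 0) * y^2
    + ((b 1 2 2 - a 1 3 1) - (b 1 0 4 - a 1 1 3) - b 1 4 0) * y^3"
  unfolding angular_even_def by (simp add: algebra_simps power2_eq_square power3_eq_cube)

lemma f1_eq_even_integral:
  assumes z: "z \<in> Dom"
  shows "f1 a b lam z = 2 * pi * lam 1 * z
    - 2 * z^7 * integral {0..pi} (\<lambda>t. angular_even a b (sin t ^ 2) / (1 - 9 * z^6 * sin t ^ 2))"
proof -
  define d where "d = 9 * z^6"
  have "0 < z" "3 * z^3 < 1" using z by (auto simp: Dom_iff)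
  then have "d < 1"
    unfolding d_def using power_strict_mono[of "3 * z^3" 1 2] by (simp add: eval_nat_numeral)
  have den: "1 - d * x^2 \<noteq> 0" if "x \<in> {-1..1}" for x
  proof -
    have "x^2 \<le> 1" using that by (simp add: abs_square_le_1 abs_le_iff)
    then have "d * x^2 \<le> d" by (rule mult_left_le) (simp add: d_def)
    with \<open>d < 1\<close> show ?thesis by simp
  qed
  have even: "((\<lambda>t. angular_even a b (sin t ^ 2) / (1 - d * sin t ^ 2)) has_integral
      integral {0..pi} (\<lambda>t. angular_even a b (sin t ^ 2) / (1 - d * sin t ^ 2))) {0..pi}"
    using den by (intro integrable_integral integrable_continuous_real)
      (auto simp: angular_even_def intro!: continuous_intros)
  have odd: "((\<lambda>t. cos t * (angular_odd a b (sin t) / (1 - d * sin t ^ 2))) has_integral 0) {0..pi}"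
    using den by (intro has_integral_cos_mult_sin_comp)
      (auto simp: angular_odd_def intro!: continuous_intros)
  have "f1 a b lam z = integral {0..pi} (\<lambda>t. 2 * lam 1 * z - 2 * z^7 *
      (angular_even a b (sin t ^ 2) / (1 - d * sin t ^ 2) + cos t * (angular_odd a b (sin t) / (1 - d * sin t ^ 2))))"
  proof -
    have "2 * z^7 * cos t * angular_part a b t / (1 - d * sin t ^ 2)
        = 2 * z^7 * (cos t * angular_part a b t / (1 - d * sin t ^ 2))" for t
      by simp
    then show ?thesis
      unfolding f1_eq_integral_half_period[OF z] d_def[symmetric] cos_mult_angular_part add_divide_distrib
      by simp
  qed
  also have "\<dots> = pi * (2 * lam 1 * z) - 2 * z^7 *
      (integral {0..pi} (\<lambda>t. angular_even a b (sin t ^ 2) / (1 - d * sin t ^ 2)) + 0)"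
    by (intro integral_unique has_integral_diff has_integral_mult_right has_integral_add even odd)
      (use has_integral_const_real[of "2 * lam 1 * z" 0 pi] in simp)
  finally show ?thesis by (simp add: d_def)
qed

lemma zsub_cube:
  assumes "0 < s" "s < 1"
  shows "zsub s ^ 3 = (1 - s^2) / (3 * (1 + s^2))"
proof -
  have "s^2 < 1" using assms by (simp add: power_less_one_iff)
  then have "0 < (1 - s^2) / (3 * (1 + s^2))" by (simp add: add_pos_nonneg)
  then show ?thesis unfolding zsub_def by (rule powr_third_cube)
qed

lemma bij_betw_zsub: "bij_betw zsub {0<..<1} Dom"
  unfolding bij_betw_def
proof
  show "inj_on zsub {0<..<1}"
  proof (rule inj_onI)
    fix s1 s2 :: real
    assume s1: "s1 \<in> {0<..<1}" and s2: "s2 \<in> {0<..<1}" and "zsub s1 = zsub s2"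
    then have "(1 - s1^2) / (3 * (1 + s1^2)) = (1 - s2^2) / (3 * (1 + s2^2))"
      using zsub_cube[of s1] zsub_cube[of s2] by auto
    then have "(1 - s1^2) * (1 + s2^2) = (1 - s2^2) * (1 + s1^2)"
      by (simp add: field_simps add_pos_nonneg add_nonneg_eq_0_iff)
    then have "s1^2 = s2^2" by (simp add: algebra_simps)
    then show "s1 = s2" using s1 s2 by (simp add: power2_eq_iff_nonneg)
  qed
  show "zsub ` {0<..<1} = Dom"
  proof (intro equalityI subsetI)
    fix z assume "z \<in> zsub ` {0<..<1}"
    then obtain s where s: "0 < s" "s < 1" and z: "z = zsub s" by auto
    have "s^2 < 1" using s by (simp add: power_less_one_iff)
    then have base_pos: "0 < (1 - s^2) / (3 * (1 + s^2))"
      by (simp add: add_pos_nonneg)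
    have "3 * ((1 - s^2) / (3 * (1 + s^2))) < 1"
      using \<open>s^2 < 1\<close> s by (simp add: field_simps add_pos_nonneg)
    moreover have "0 < zsub s"
      using base_pos unfolding zsub_def powr_gt_zero by linarith
    ultimately show "z \<in> Dom" unfolding Dom_iff z zsub_cube[OF s] by simp
  next
    fix z assume "z \<in> Dom"
    then have z: "0 < z" "3 * z^3 < 1" by (auto simp: Dom_iff)
    define c where "c = 3 * z^3"
    have c: "0 < c" "c < 1" using z by (auto simp: c_def)
    define s where "s = sqrt ((1 - c) / (1 + c))"
    have s: "0 < s" "s < 1" unfolding s_def using c by (auto simp: field_simps)
    have "(1 - s^2) / (3 * (1 + s^2)) = c / 3"
      unfolding s_def using c by (simp add: field_simps)
    then have "(1 - s^2) / (3 * (1 + s^2)) = z^3"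
      by (simp add: c_def)
    then have "zsub s = z"
      unfolding zsub_def using cube_powr_third[OF z(1)] by simp
    then show "z \<in> zsub ` {0<..<1}" using s by force
  qed
qed

lemma zsub_prefactor:
  assumes s: "0 < s" "s < 1"
  shows "3 powr (2/3) * (1 - s) powr (1/3) / (108 * (1 + s) powr (11/3) * (1 + s^2) powr (4/3))
    = zsub s / (36 * (1 + s)^4 * (1 + s^2))"
proof -
  have cube_root_pow: "x powr (real n / 3) = (x powr (1/3)) ^ n" if "0 < x" for x :: real and n
    using that by (simp add: powr_power)
  define A where "A = (3::real) powr (1/3)"
  define B where "B = (1 - s) powr (1/3)"
  define C where "C = (1 + s) powr (1/3)"
  define E where "E = (1 + s^2) powr (1/3)"
  have u: "0 < 1 + s^2" by (simp add: add_pos_nonneg)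
  have pos: "0 < A" "0 < B" "0 < C" "0 < E" using s u by (auto simp: A_def B_def C_def E_def)
  have A3: "A^3 = 3" and C3: "C^3 = 1 + s" and E3: "E^3 = 1 + s^2"
    unfolding A_def C_def E_def using s u by (simp_all add: powr_third_cube)
  have "zsub s = B * C / (A * E)"
  proof -
    have "(1 - s^2) / (3 * (1 + s^2)) = ((1 - s) * (1 + s)) / (3 * (1 + s^2))"
      by (simp add: algebra_simps power2_eq_square)
    then show ?thesis
      unfolding zsub_def A_def B_def C_def E_def by (simp only: powr_mult powr_divide)
  qed
  moreover have "3 powr (2/3) = A^2" "(1 + s) powr (11/3) = C^11" "(1 + s^2) powr (4/3) = E^4"
    unfolding A_def C_def E_def using cube_root_pow[of 3 2] cube_root_pow[of "1 + s" 11]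
      cube_root_pow[of "1 + s^2" 4] s u by simp_all
  moreover have "A^2 * B / (108 * C^11 * E^4) = A^3 * (B * C / (A * E)) / (108 * (C^3)^4 * E^3)"
    using pos by (simp add: field_simps eval_nat_numeral)
  ultimately show ?thesis
    unfolding A3 C3 E3 B_def[symmetric] by simp
qed

text \<open>The rational identity left over once z = zsub s: then 9 z^6 = d and the square root
  appearing in the integral of 1 / (1 - d sin^2) is w = 2 s / (1 + s^2).\<close>

lemma averaged_value_identity:
  fixes s l \<alpha> \<beta> \<gamma> :: real
  assumes s: "0 < s" "s < 1"
  defines "u \<equiv> 1 + s^2"
  assumes d_eq: "d * u^2 = (1 - s^2)^2" and w_eq: "w * u = 2 * s"
  defines "e0 \<equiv> \<gamma>" and "e1 \<equiv> \<beta> - 3 * \<gamma>" and "e2 \<equiv> \<alpha> - 2 * \<beta> + 3 * \<gamma>" and "e3 \<equiv> \<beta> - \<alpha> - \<gamma>"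
  shows "2 * l - 2 * (d / 9) * ((e0 + e1/d + e2/d^2 + e3/d^3) / w - (e1 + e2/d + e3/d^2) / d
      - (e2 + e3/d) / (2*d) - 3*e3 / (8*d))
    = ((72 * l - 3 * \<alpha> - \<beta> - 3 * \<gamma>) * s^6 + (288 * l + 4 * \<alpha> - 4 * \<beta> - 12 * \<gamma>) * s^5
      + (504 * l - 5 * \<alpha> + 9 * \<beta> - 5 * \<gamma>) * s^4 + (576 * l + 8 * \<alpha> - 8 * \<beta> + 40 * \<gamma>) * s^3
      + (504 * l - 5 * \<alpha> + 9 * \<beta> - 5 * \<gamma>) * s^2 + (288 * l + 4 * \<alpha> - 4 * \<beta> - 12 * \<gamma>) * s
      + (72 * l - 3 * \<alpha> - \<beta> - 3 * \<gamma>)) / (36 * (1 + s)^4 * u)"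
proof -
  have u: "0 < u" and "0 < 1 + s"
    using s by (auto simp: u_def add_pos_nonneg)
  have "s^2 < 1"
    using s by (simp add: power_less_one_iff)
  then have "d \<noteq> 0" and "w \<noteq> 0"
    using d_eq w_eq s u by auto
  then show ?thesis
    using u \<open>0 < 1 + s\<close> unfolding e0_def e1_def e2_def e3_def
    by (simp add: field_simps) (use d_eq w_eq in \<open>unfold u_def, algebra\<close>)
qed

lemma f1_zsub:
  assumes s: "0 < s" "s < 1"
  shows "let N1 = 3 * a 1 1 3 + a 1 3 1 - 3 * b 1 0 4 - b 1 2 2 - 3 * b 1 4 0 + 72 * lam 1;
            N2 = -4 * a 1 1 3 + 4 * b 1 0 4 + 4 * a 1 3 1 - 4 * b 1 2 2 - 12 * b 1 4 0 + 288 * lam 1;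
            N3 = 5 * a 1 1 3 - 9 * a 1 3 1 - 5 * b 1 0 4 + 9 * b 1 2 2 - 5 * b 1 4 0 + 504 * lam 1;
            N4 = -8 * a 1 1 3 + 8 * a 1 3 1 + 8 * b 1 0 4 - 8 * b 1 2 2 + 40 * b 1 4 0 + 576 * lam 1
        in f1 a b lam (zsub s) =
           pi * 3 powr (2/3) * (1 - s) powr (1/3)
             / (108 * (1 + s) powr (11/3) * (1 + s^2) powr (4/3))
           * (N1 * s^6 + N2 * s^5 + N3 * s^4 + N4 * s^3 + N3 * s^2 + N2 * s + N1)"
proof -
  define z where "z = zsub s"
  define u where "u = 1 + s^2"
  define w where "w = 2 * s / u"
  have u: "0 < u" by (simp add: u_def add_pos_nonneg)
  have z: "z \<in> Dom" using bij_betw_zsub s unfolding bij_betw_def z_def by auto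
  have wu: "w * u = 2 * s" using u by (simp add: w_def)
  have w: "0 < w" "w \<noteq> 1"
  proof -
    show "0 < w" using s u by (simp add: w_def)
    have "0 < (1 - s)^2" using s by simp
    then show "w \<noteq> 1" using wu by (auto simp: u_def power2_eq_square algebra_simps)
  qed
  have w_sq: "(1 - w^2) * u^2 = (1 - s^2)^2"
    using wu unfolding u_def by algebra
  have z6: "9 * z^6 = 1 - w^2"
  proof -
    have "9 * z^6 = 9 * (z^3)^2"
      by (simp flip: power_mult)
    also have "\<dots> = (1 - s^2)^2 / u^2"
      unfolding z_def zsub_cube[OF s] u_def[symmetric] by (simp add: power_divide power_mult_distrib)
    also have "\<dots> = 1 - w^2"
      using u by (simp add: divide_eq_eq w_sq)
    finally show ?thesis .
  qed
  define d where "d = 1 - w^2"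
  define e0 e1 e2 e3 where "e0 = b 1 4 0" and "e1 = (b 1 2 2 - a 1 3 1) - 3 * b 1 4 0"
    and "e2 = (b 1 0 4 - a 1 1 3) - 2 * (b 1 2 2 - a 1 3 1) + 3 * b 1 4 0"
    and "e3 = (b 1 2 2 - a 1 3 1) - (b 1 0 4 - a 1 1 3) - b 1 4 0"
  define R where "R = (e0 + e1/d + e2/d^2 + e3/d^3) / w - (e1 + e2/d + e3/d^2) / d
      - (e2 + e3/d) / (2*d) - 3*e3 / (8*d)"
  have "((\<lambda>t. angular_even a b (sin t ^ 2) / (1 - 9 * z^6 * sin t ^ 2)) has_integral pi * R) {0..pi}"
    using has_integral_cubic_sin_sq_quotient[OF w, of e0 e1 e2 e3]
    unfolding z6 angular_even_expand R_def d_def e0_def e1_def e2_def e3_def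
    by (simp flip: power_mult)
  moreover have "z^7 = z * (d / 9)"
    using z6 by (simp add: d_def eval_nat_numeral)
  ultimately have f1z: "f1 a b lam z = pi * z * (2 * lam 1 - 2 * (d / 9) * R)"
    unfolding f1_eq_even_integral[OF z] by (simp add: integral_unique algebra_simps)
  have "d * (1 + s^2)^2 = (1 - s^2)^2" "w * (1 + s^2) = 2 * s"
    using w_sq wu by (simp_all add: d_def u_def)
  note identity = averaged_value_identity[OF s this, where l = "lam 1"
      and \<alpha> = "b 1 0 4 - a 1 1 3" and \<beta> = "b 1 2 2 - a 1 3 1" and \<gamma> = "b 1 4 0"]
  have prefactor: "pi * 3 powr (2/3) * (1 - s) powr (1/3) / (108 * (1 + s) powr (11/3) * (1 + s^2) powr (4/3))
      = pi * (z / (36 * (1 + s)^4 * u))"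
    unfolding z_def u_def zsub_prefactor[OF s, symmetric] by (simp add: mult.assoc)
  have cong: "pi * z * (X / D) = pi * (z / D) * Y" if "X = Y" for X Y D :: real
    using that by simp
  show ?thesis
    unfolding Let_def prefactor z_def[symmetric] f1z R_def e0_def e1_def e2_def e3_def identity u_def
    by (rule cong) algebra
qed

theorem mainTheorem7:
  fixes a b :: "nat \<Rightarrow> nat \<Rightarrow> nat \<Rightarrow> real" and lam :: "nat \<Rightarrow> real"
  shows "(\<forall>\<theta> r. r > 0 \<longrightarrow> F0 a b lam \<theta> r = r^4 * cos \<theta>)
   \<and> (\<forall>z\<in>Dom. rsol z 0 = z \<and>
        (\<forall>\<theta>. (rsol z has_real_derivative F0 a b lam \<theta> (rsol z \<theta>)) (at \<theta>)
             \<and> rsol z \<theta> > 0 \<and> rsol z (\<theta> + 2*pi) = rsol z \<theta>))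
   \<and> (\<forall>z\<in>Dom. Ysol z 0 = 1 \<and>
        (\<forall>\<theta>. (Ysol z has_real_derivative
               (deriv (\<lambda>\<rho>. F0 a b lam \<theta> \<rho>) (rsol z \<theta>) * Ysol z \<theta>)) (at \<theta>)))
   \<and> bij_betw zsub {0<..<1} Dom
   \<and> (\<forall>s\<in>{0<..<1::real}.
        let N1 = 3 * a 1 1 3 + a 1 3 1 - 3 * b 1 0 4 - b 1 2 2 - 3 * b 1 4 0 + 72 * lam 1;
            N2 = -4 * a 1 1 3 + 4 * b 1 0 4 + 4 * a 1 3 1 - 4 * b 1 2 2 - 12 * b 1 4 0 + 288 * lam 1;
            N3 = 5 * a 1 1 3 - 9 * a 1 3 1 - 5 * b 1 0 4 + 9 * b 1 2 2 - 5 * b 1 4 0 + 504 * lam 1;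
            N4 = -8 * a 1 1 3 + 8 * a 1 3 1 + 8 * b 1 0 4 - 8 * b 1 2 2 + 40 * b 1 4 0 + 576 * lam 1
        in f1 a b lam (zsub s) =
           pi * 3 powr (2/3) * (1 - s) powr (1/3)
             / (108 * (1 + s) powr (11/3) * (1 + s^2) powr (4/3))
           * (N1 * s^6 + N2 * s^5 + N3 * s^4 + N4 * s^3 + N3 * s^2 + N2 * s + N1))"
proof (intro conjI ballI allI impI)
  fix z assume z: "z \<in> Dom"
  show "rsol z 0 = z" by (simp add: rsol_def)
  show "Ysol z 0 = 1" by (simp add: Ysol_def)
  fix \<theta>
  show "(rsol z has_real_derivative F0 a b lam \<theta> (rsol z \<theta>)) (at \<theta>)"
    "0 < rsol z \<theta>" "rsol z (\<theta> + 2*pi) = rsol z \<theta>"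
    using rsol_solves[OF z] by auto
  show "(Ysol z has_real_derivative deriv (\<lambda>\<rho>. F0 a b lam \<theta> \<rho>) (rsol z \<theta>) * Ysol z \<theta>) (at \<theta>)"
    using Ysol_solves[OF z] .
qed (use F0_polar bij_betw_zsub f1_zsub in auto)

end
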